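(* Let $f:\mathbb{R}^d\times\mathbb{R}^d\to\mathbb{R}$ be $C^2$-smooth with $L$-Lipschitz gradient and $L$-Lipschitz Hessian, let $\epsilon>0$, $\sigma>0$, and suppose $\|\nabla_y f(x^\star,y^\star)\|\le\epsilon$ for some $x^\star,y^\star\in\mathbb{R}^d$. Then $\mathbb{E}_{\zeta\sim N(0,I_d)}[\|\nabla_y f(x^\star+\sigma\zeta,y^\star)\|]\le \epsilon+\frac{1}{2\epsilon}L^2\sigma^2 d+\frac12\sigma^2 L d.$ *)

theory Defs
  imports "HOL-Probability.Probability"
begin

definition std_gaussian :: "(real^'n::finite) measure" where
  "std_gaussian = density lborel
     (\<lambda>z. ennreal ((2 * pi) powr (- real CARD('n) / 2) * exp (- (norm z)\<^sup>2 / 2)))"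

end

theory Submission
  imports Defs
begin

text \<open>
  Write \<open>\<phi>(\<zeta>)\<close> for the norm of the \<open>y\<close>-part of \<open>G (x\<^sup>\<star> + \<sigma>\<zeta>, y\<^sup>\<star>)\<close>; only the gradient map \<open>G\<close>
  enters.
  With \<open>z = (x\<^sup>\<star>, y\<^sup>\<star>)\<close> and \<open>h = (\<sigma>\<zeta>, 0)\<close>, Taylor's formula with \<open>L\<close>-Lipschitz Hessian gives
  \<open>G (z \<plusminus> h) = G z \<plusminus> H z h + r\<^sub>\<plusminus>\<close> with \<open>\<parallel>r\<^sub>\<plusminus>\<parallel> \<le> L\<parallel>h\<parallel>\<^sup>2/2\<close>, and \<open>\<parallel>H z h\<parallel> \<le> L\<parallel>h\<parallel>\<close> since
  \<open>G\<close> is \<open>L\<close>-Lipschitz. For \<open>\<parallel>u\<parallel> \<le> \<epsilon>\<close> the parallelogram law gives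
  \<open>\<parallel>u + w\<parallel> + \<parallel>u - w\<parallel> \<le> 2\<epsilon> + \<parallel>w\<parallel>\<^sup>2/\<epsilon>\<close>, so the first-order terms cancel in the symmetrised
  quantity: \<open>\<phi>(\<zeta>) + \<phi>(-\<zeta>) \<le> 2(\<epsilon> + K\<parallel>\<zeta>\<parallel>\<^sup>2)\<close> with \<open>K = L\<^sup>2\<sigma>\<^sup>2/(2\<epsilon>) + L\<sigma>\<^sup>2/2\<close>.
  The standard Gaussian is invariant under \<open>\<zeta> \<mapsto> -\<zeta>\<close> and has \<open>E\<parallel>\<zeta>\<parallel>\<^sup>2 = d\<close>, so
  integrating yields \<open>E \<phi> \<le> \<epsilon> + K d\<close>.
\<close>

lemma power2_norm_eq_sum_Basis:
  fixes z :: "'a::euclidean_space"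
  shows "(norm z)\<^sup>2 = (\<Sum>b\<in>Basis. (z \<bullet> b)\<^sup>2)"
  by (subst power2_norm_eq_inner, subst euclidean_inner) (simp add: power2_eq_square)

lemma prod_std_normal_density_inner_Basis:
  fixes z :: "'a::euclidean_space"
  shows "(\<Prod>b\<in>Basis. std_normal_density (z \<bullet> b))
           = (2 * pi) powr (- real DIM('a) / 2) * exp (- (norm z)\<^sup>2 / 2)"
proof -
  have "(\<Prod>b\<in>Basis. std_normal_density (z \<bullet> b))
          = (1 / sqrt (2 * pi)) ^ DIM('a) * exp (- (\<Sum>b\<in>Basis. (z \<bullet> b)\<^sup>2) / 2)"
    by (simp add: std_normal_density_def prod_dividef exp_sum sum_divide_distrib flip: sum_negf)
      (simp add: power_one_over)
  also have "(1 / sqrt (2 * pi)) ^ DIM('a) = ((2 * pi) powr (-1 / 2)) ^ DIM('a)"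
    by (simp add: powr_minus_divide powr_half_sqrt[symmetric])
  also have "\<dots> = (2 * pi) powr (- real DIM('a) / 2)"
    by (simp add: powr_realpow[symmetric] powr_powr)
  finally show ?thesis
    by (simp add: power2_norm_eq_sum_Basis)
qed

lemma std_gaussian_eq_prod_density:
  "std_gaussian = density lborel (\<lambda>z::real^'n::finite. ennreal (\<Prod>b\<in>Basis. std_normal_density (z \<bullet> b)))"
  by (simp add: std_gaussian_def prod_std_normal_density_inner_Basis)

lemma sets_std_gaussian [measurable_cong, simp]: "sets std_gaussian = sets borel"
  by (simp add: std_gaussian_def)

lemma nn_integral_std_normal_moment_even:
  "(\<integral>\<^sup>+x. ennreal (std_normal_density x * x ^ (2 * k)) \<partial>lborel)
     = ennreal (fact (2 * k) / (2 ^ k * fact k))"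
  using std_normal_moment_even[of k]
  by (subst nn_integral_eq_integral)
     (auto simp: has_bochner_integral_iff integral_std_normal_moment_even)

lemma nn_integral_std_gaussian_prod_moments:
  "(\<integral>\<^sup>+z. ennreal (\<Prod>b\<in>Basis. (z \<bullet> b) ^ (2 * k b)) \<partial>std_gaussian)
     = (\<Prod>b\<in>(Basis :: (real^'n::finite) set). ennreal (fact (2 * k b) / (2 ^ k b * fact (k b))))"
proof -
  have "(\<integral>\<^sup>+z. ennreal (\<Prod>b\<in>Basis. (z \<bullet> b) ^ (2 * k b)) \<partial>std_gaussian)
      = (\<integral>\<^sup>+z. (\<Prod>b\<in>Basis. ennreal (std_normal_density (z \<bullet> b) * (z \<bullet> b) ^ (2 * k b))) \<partial>lborel)"
    unfolding std_gaussian_eq_prod_density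
    by (subst nn_integral_density)
       (auto intro!: nn_integral_cong simp: prod_ennreal ennreal_mult'[symmetric]
          prod.distrib prod_nonneg)
  also have "\<dots> = (\<Prod>b\<in>(Basis :: (real^'n) set).
                      \<integral>\<^sup>+x. ennreal (std_normal_density x * x ^ (2 * k b)) \<partial>lborel)"
    by (rule nn_integral_lborel_prod) auto
  finally show ?thesis
    by (simp add: nn_integral_std_normal_moment_even)
qed

lemma prob_space_std_gaussian: "prob_space (std_gaussian :: (real^'n::finite) measure)"
proof
  have "(\<integral>\<^sup>+(z::real^'n). ennreal (\<Prod>b\<in>Basis. (z \<bullet> b) ^ (2 * 0)) \<partial>std_gaussian) = 1"
    by (subst nn_integral_std_gaussian_prod_moments) simp
  then show "emeasure (std_gaussian :: (real^'n) measure) (space std_gaussian) = 1"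
    by simp
qed

lemma nn_integral_std_gaussian_norm_sq:
  "(\<integral>\<^sup>+(\<zeta>::real^'n::finite). ennreal ((norm \<zeta>)\<^sup>2) \<partial>std_gaussian) = of_nat CARD('n)"
proof -
  let ?e = "\<lambda>c b::real^'n. if b = c then 1 else 0 :: nat"
  have sq: "(norm \<zeta>)\<^sup>2 = (\<Sum>c\<in>Basis. \<Prod>b\<in>Basis. (\<zeta> \<bullet> b) ^ (2 * ?e c b))" for \<zeta> :: "real^'n"
    by (simp add: power2_norm_eq_sum_Basis if_distrib prod.If_cases)
  have "(\<integral>\<^sup>+(\<zeta>::real^'n). ennreal ((norm \<zeta>)\<^sup>2) \<partial>std_gaussian)
          = (\<integral>\<^sup>+\<zeta>. (\<Sum>c\<in>Basis. ennreal (\<Prod>b\<in>Basis. (\<zeta> \<bullet> b) ^ (2 * ?e c b))) \<partial>std_gaussian)"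
    by (intro nn_integral_cong) (simp add: sq prod_nonneg)
  also have "\<dots> = (\<Sum>c\<in>Basis. \<integral>\<^sup>+\<zeta>. ennreal (\<Prod>b\<in>Basis. (\<zeta> \<bullet> b) ^ (2 * ?e c b)) \<partial>std_gaussian)"
    by (rule nn_integral_sum) simp
  also have "\<dots> = (\<Sum>c\<in>(Basis :: (real^'n) set). 1)"
    by (intro sum.cong refl, subst nn_integral_std_gaussian_prod_moments) (auto intro!: prod.neutral)
  finally show ?thesis
    by simp
qed

lemma nn_integral_lborel_reflect:
  fixes g :: "'a::euclidean_space \<Rightarrow> ennreal"
  assumes [measurable]: "g \<in> borel_measurable borel"
  shows "(\<integral>\<^sup>+x. g (- x) \<partial>lborel) = (\<integral>\<^sup>+x. g x \<partial>lborel)"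
  by (subst (2) lborel_affine[of "-1" 0]) (simp_all add: nn_integral_density nn_integral_distr)

lemma nn_integral_std_gaussian_reflect:
  fixes g :: "real^'n::finite \<Rightarrow> ennreal"
  assumes [measurable]: "g \<in> borel_measurable borel"
  shows "(\<integral>\<^sup>+\<zeta>. g (- \<zeta>) \<partial>std_gaussian) = (\<integral>\<^sup>+\<zeta>. g \<zeta> \<partial>std_gaussian)"
  using nn_integral_lborel_reflect[where g = "\<lambda>\<zeta>. ennreal ((2 * pi) powr (- real CARD('n) / 2)
                                          * exp (- (norm \<zeta>)\<^sup>2 / 2)) * g \<zeta>"]
  by (simp add: std_gaussian_def nn_integral_density)

lemma nn_integral_std_gaussian_symmetrize:
  fixes g :: "real^'n::finite \<Rightarrow> ennreal"
  assumes [measurable]: "g \<in> borel_measurable borel"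
  shows "2 * (\<integral>\<^sup>+\<zeta>. g \<zeta> \<partial>std_gaussian) = (\<integral>\<^sup>+\<zeta>. g \<zeta> + g (- \<zeta>) \<partial>std_gaussian)"
  by (simp add: nn_integral_add nn_integral_std_gaussian_reflect mult_2)

lemma nn_integral_std_gaussian_quadratic:
  assumes "0 \<le> a" "0 \<le> b"
  shows "(\<integral>\<^sup>+(\<zeta>::real^'n::finite). ennreal (a + b * (norm \<zeta>)\<^sup>2) \<partial>std_gaussian)
           = ennreal (a + b * CARD('n))"
proof -
  interpret prob_space "std_gaussian :: (real^'n) measure"
    by (rule prob_space_std_gaussian)
  have "(\<integral>\<^sup>+(\<zeta>::real^'n). ennreal (a + b * (norm \<zeta>)\<^sup>2) \<partial>std_gaussian)
          = (\<integral>\<^sup>+(\<zeta>::real^'n). ennreal a + ennreal b * ennreal ((norm \<zeta>)\<^sup>2) \<partial>std_gaussian)"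
    using assms by (simp add: ennreal_mult)
  also have "\<dots> = ennreal a + ennreal b * of_nat CARD('n)"
    by (simp add: nn_integral_add nn_integral_cmult emeasure_space_1 flip: nn_integral_std_gaussian_norm_sq)
  finally show ?thesis
    using assms by (simp add: ennreal_mult ennreal_of_nat_eq_real_of_nat)
qed

lemma nn_integral_std_gaussian_le_of_symmetric_bound:
  fixes g :: "real^'n::finite \<Rightarrow> real"
  assumes [measurable]: "g \<in> borel_measurable borel"
    and nonneg: "\<And>\<zeta>. 0 \<le> g \<zeta>"
    and bound: "\<And>\<zeta>. g \<zeta> + g (- \<zeta>) \<le> 2 * (a + b * (norm \<zeta>)\<^sup>2)"
    and "0 \<le> a" "0 \<le> b"
  shows "(\<integral>\<^sup>+\<zeta>. ennreal (g \<zeta>) \<partial>std_gaussian) \<le> ennreal (a + b * CARD('n))"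
proof -
  have "2 * (\<integral>\<^sup>+\<zeta>. ennreal (g \<zeta>) \<partial>std_gaussian)
          = (\<integral>\<^sup>+\<zeta>. ennreal (g \<zeta>) + ennreal (g (- \<zeta>)) \<partial>std_gaussian)"
    by (rule nn_integral_std_gaussian_symmetrize) measurable
  also have "\<dots> \<le> (\<integral>\<^sup>+(\<zeta>::real^'n). ennreal (2 * a + 2 * b * (norm \<zeta>)\<^sup>2) \<partial>std_gaussian)"
    using bound nonneg by (intro nn_integral_mono) (simp add: ennreal_leI mult.assoc flip: ennreal_plus)
  also have "\<dots> = ennreal (2 * a + 2 * b * CARD('n))"
    using \<open>0 \<le> a\<close> \<open>0 \<le> b\<close> by (intro nn_integral_std_gaussian_quadratic) auto
  also have "\<dots> = 2 * ennreal (a + b * CARD('n))"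
    using ennreal_mult'[of 2 "a + b * CARD('n)"] by (simp add: distrib_left mult.assoc)
  finally show ?thesis
    by (simp add: ennreal_mult_le_mult_iff)
qed

lemma norm_derivative_le_of_lipschitz:
  fixes G :: "'a::real_normed_vector \<Rightarrow> 'b::real_normed_vector"
  assumes deriv: "(G has_derivative D) (at z)"
    and lip: "\<And>w. norm (G w - G z) \<le> L * norm (w - z)"
  shows "norm (D h) \<le> L * norm h"
proof (cases "h = 0")
  case True
  with has_derivative_bounded_linear[OF deriv] show ?thesis
    by (simp add: linear_simps)
next
  case False
  show ?thesis
  proof (rule field_le_epsilon)
    fix e :: real
    assume "0 < e"
    with False have "0 < e / norm h" by simp
    with deriv obtain d where "0 < d" and d:
      "\<And>y. norm (y - z) < d \<Longrightarrow> norm (G y - G z - D (y - z)) \<le> e / norm h * norm (y - z)"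
      unfolding has_derivative_at_alt by blast
    define t where "t = d / (2 * norm h)"
    have "0 < t" using \<open>0 < d\<close> False by (simp add: t_def)
    have "norm (t *\<^sub>R h) < d" using \<open>0 < d\<close> False by (simp add: t_def)
    have "t * norm (D h) = norm (D (t *\<^sub>R h))"
      using \<open>0 < t\<close> has_derivative_bounded_linear[OF deriv] by (simp add: linear_simps)
    also have "\<dots> \<le> norm (G (z + t *\<^sub>R h) - G z) + norm (G (z + t *\<^sub>R h) - G z - D (t *\<^sub>R h))"
      using norm_triangle_ineq4[of "G (z + t *\<^sub>R h) - G z" "G (z + t *\<^sub>R h) - G z - D (t *\<^sub>R h)"]
      by simp
    also have "\<dots> \<le> L * (t * norm h) + e / norm h * (t * norm h)"
      using lip[of "z + t *\<^sub>R h"] d[of "z + t *\<^sub>R h"] \<open>norm (t *\<^sub>R h) < d\<close> \<open>0 < t\<close>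
      by (intro add_mono) auto
    also have "\<dots> = t * (L * norm h + e)"
      using False by (simp add: field_simps)
    finally show "norm (D h) \<le> L * norm h + e"
      using \<open>0 < t\<close> by simp
  qed
qed

lemma norm_second_order_remainder_le:
  fixes G :: "'a::real_normed_vector \<Rightarrow> 'b::real_normed_vector"
  assumes deriv: "\<And>y. (G has_derivative blinfun_apply (H y)) (at y)"
    and lip: "\<And>y w. norm (H y - H w) \<le> L * norm (y - w)"
  shows "norm (G (z + h) - G z - H z h) \<le> L / 2 * (norm h)\<^sup>2"
proof -
  define r where "r t = G (z + t *\<^sub>R h) - t *\<^sub>R H z h" for t :: real
  define r' where "r' t = H (z + t *\<^sub>R h) h - H z h" for t :: real
  have r_deriv: "(r has_vector_derivative r' t) (at t)" for t
  proof -
    have "((\<lambda>t. z + t *\<^sub>R h) has_derivative (\<lambda>s. s *\<^sub>R h)) (at t)"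
      by (auto intro!: derivative_eq_intros)
    from has_derivative_compose[OF this deriv]
    have "((\<lambda>t. G (z + t *\<^sub>R h)) has_derivative (\<lambda>s. s *\<^sub>R H (z + t *\<^sub>R h) h)) (at t)"
      by (simp add: blinfun.scaleR_right)
    then show ?thesis
      unfolding r_def r'_def has_vector_derivative_def
      by (auto intro!: derivative_eq_intros simp: scaleR_diff_right)
  qed
  have bound_deriv: "((\<lambda>t. L / 2 * (norm h)\<^sup>2 * t\<^sup>2) has_vector_derivative L * (norm h)\<^sup>2 * t) (at t)"
    for t :: real
    unfolding has_vector_derivative_def
    by (auto intro!: derivative_eq_intros simp: algebra_simps)
  have "norm (r' t) \<le> L * (norm h)\<^sup>2 * t" if "0 < t" for t
  proof -
    have "norm (r' t) \<le> norm (H (z + t *\<^sub>R h) - H z) * norm h"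
      unfolding r'_def blinfun.diff_left[symmetric] by (rule norm_blinfun)
    also have "\<dots> \<le> L * (t * norm h) * norm h"
      using lip[of "z + t *\<^sub>R h" z] that by (intro mult_right_mono) auto
    finally show ?thesis
      by (simp add: power2_eq_square algebra_simps)
  qed
  then have "norm (r 1 - r 0) \<le> L / 2 * (norm h)\<^sup>2 * 1\<^sup>2 - L / 2 * (norm h)\<^sup>2 * 0\<^sup>2"
    using r_deriv bound_deriv
    by (intro differentiable_bound_general[where f' = r'])
       (auto intro!: continuous_at_imp_continuous_on has_vector_derivative_continuous)
  then show ?thesis
    by (simp add: r_def algebra_simps)
qed

lemma parallelogram_law:
  fixes u w :: "'a::real_inner"
  shows "(norm (u + w))\<^sup>2 + (norm (u - w))\<^sup>2 = 2 * (norm u)\<^sup>2 + 2 * (norm w)\<^sup>2"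
  by (simp add: power2_norm_eq_inner algebra_simps inner_commute)

lemma norm_add_plus_norm_diff_le:
  fixes u w :: "'a::real_inner"
  assumes "norm u \<le> e" and "0 < e"
  shows "norm (u + w) + norm (u - w) \<le> 2 * e + (norm w)\<^sup>2 / e"
proof (rule power2_le_imp_le)
  have "(norm (u + w) + norm (u - w))\<^sup>2 \<le> 2 * ((norm (u + w))\<^sup>2 + (norm (u - w))\<^sup>2)"
    using zero_le_power2[of "norm (u + w) - norm (u - w)"] by (simp add: power2_eq_square algebra_simps)
  also have "\<dots> \<le> 4 * (e\<^sup>2 + (norm w)\<^sup>2)"
    using parallelogram_law[of u w] power_mono[OF assms(1) norm_ge_zero, of 2] by simp
  also have "\<dots> \<le> (2 * e + (norm w)\<^sup>2 / e)\<^sup>2"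
    using \<open>0 < e\<close> by (simp add: power2_eq_square field_simps)
  finally show "(norm (u + w) + norm (u - w))\<^sup>2 \<le> (2 * e + (norm w)\<^sup>2 / e)\<^sup>2" .
  show "0 \<le> 2 * e + (norm w)\<^sup>2 / e"
    using \<open>0 < e\<close> by simp
qed

lemma norm_snd_le_norm: "norm (snd p) \<le> norm p"
  using norm_snd_le[where x = "fst p" and y = "snd p"] by simp

lemma norm_snd_at_plus_minus_le:
  fixes G :: "'a::real_normed_vector \<Rightarrow> 'b::real_normed_vector \<times> 'c::real_inner"
  assumes deriv: "\<And>y. (G has_derivative blinfun_apply (H y)) (at y)"
    and grad_lip: "\<And>y w. norm (G y - G w) \<le> L * norm (y - w)"
    and hess_lip: "\<And>y w. norm (H y - H w) \<le> L * norm (y - w)"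
    and small: "norm (snd (G z)) \<le> \<epsilon>" and "0 < \<epsilon>"
  shows "norm (snd (G (z + h))) + norm (snd (G (z - h)))
           \<le> 2 * \<epsilon> + (L * norm h)\<^sup>2 / \<epsilon> + L * (norm h)\<^sup>2"
proof -
  define u where "u = snd (G z)"
  define w where "w = snd (H z h)"
  have remainder: "norm (snd (G (z + k)) - u - snd (H z k)) \<le> L / 2 * (norm k)\<^sup>2" for k
    using norm_second_order_remainder_le[OF deriv hess_lip, of z k]
      norm_snd_le_norm[of "G (z + k) - G z - H z k"]
    by (simp add: u_def)
  have plus: "norm (snd (G (z + h))) \<le> norm (u + w) + L / 2 * (norm h)\<^sup>2"
    using remainder[of h] norm_triangle_ineq2[of "snd (G (z + h))" "u + w"]
    by (simp add: w_def algebra_simps)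
  have minus: "norm (snd (G (z - h))) \<le> norm (u - w) + L / 2 * (norm h)\<^sup>2"
    using remainder[of "- h"] norm_triangle_ineq2[of "snd (G (z - h))" "u - w"]
    by (simp add: w_def blinfun.minus_right algebra_simps)
  have "norm w \<le> L * norm h"
    using norm_derivative_le_of_lipschitz[OF deriv grad_lip, of z h] norm_snd_le_norm[of "H z h"]
    by (simp add: w_def)
  then have "(norm w)\<^sup>2 / \<epsilon> \<le> (L * norm h)\<^sup>2 / \<epsilon>"
    using \<open>0 < \<epsilon>\<close> by (intro divide_right_mono power_mono) auto
  then show ?thesis
    using plus minus norm_add_plus_norm_diff_le[of u \<epsilon> w] small \<open>0 < \<epsilon>\<close>
    by (simp add: u_def)
qed

theorem lemmaA2:
  fixes f :: "(real^'n::finite) \<times> (real^'n) \<Rightarrow> real"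
    and G :: "(real^'n) \<times> (real^'n) \<Rightarrow> (real^'n) \<times> (real^'n)"
    and H :: "(real^'n) \<times> (real^'n) \<Rightarrow> ((real^'n) \<times> (real^'n)) \<Rightarrow>\<^sub>L ((real^'n) \<times> (real^'n))"
    and L \<epsilon> \<sigma> :: real
    and xs ys :: "real^'n"
  assumes grad: "\<And>z. (f has_derivative (\<lambda>h. G z \<bullet> h)) (at z)"
    and hess: "\<And>z. (G has_derivative blinfun_apply (H z)) (at z)"
    and hess_cont: "continuous_on UNIV H"
    and grad_lip: "\<And>z w. norm (G z - G w) \<le> L * norm (z - w)"
    and hess_lip: "\<And>z w. norm (H z - H w) \<le> L * norm (z - w)"
    and eps_pos: "\<epsilon> > 0"
    and sigma_pos: "\<sigma> > 0"
    and small_grad: "norm (snd (G (xs, ys))) \<le> \<epsilon>"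
  shows "(\<integral>\<^sup>+ \<zeta>. ennreal (norm (snd (G (xs + \<sigma> *\<^sub>R \<zeta>, ys)))) \<partial>std_gaussian)
           \<le> ennreal (\<epsilon> + (1 / (2 * \<epsilon>)) * L\<^sup>2 * \<sigma>\<^sup>2 * real CARD('n)
                     + (1/2) * \<sigma>\<^sup>2 * L * real CARD('n))"
proof -
  define \<phi> where "\<phi> \<zeta> = norm (snd (G (xs + \<sigma> *\<^sub>R \<zeta>, ys)))" for \<zeta> :: "real^'n"
  define K where "K = L\<^sup>2 * \<sigma>\<^sup>2 / (2 * \<epsilon>) + L * \<sigma>\<^sup>2 / 2"
  have "0 \<le> L"
    using order_trans[OF norm_ge_zero grad_lip[of "(1, 0)" 0]] by (simp add: zero_le_mult_iff norm_Pair)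
  with eps_pos have "0 \<le> K"
    by (simp add: K_def)
  have "continuous_on UNIV G"
    using hess by (meson continuous_at_imp_continuous_on has_derivative_continuous)
  then have "\<phi> \<in> borel_measurable borel"
    unfolding \<phi>_def
    by (intro borel_measurable_continuous_onI continuous_intros
          continuous_on_compose2[OF \<open>continuous_on UNIV G\<close>]) auto
  moreover have "0 \<le> \<phi> \<zeta>" for \<zeta>
    by (simp add: \<phi>_def)
  moreover have "\<phi> \<zeta> + \<phi> (- \<zeta>) \<le> 2 * (\<epsilon> + K * (norm \<zeta>)\<^sup>2)" for \<zeta>
  proof -
    have "\<phi> \<zeta> + \<phi> (- \<zeta>) \<le> 2 * \<epsilon> + (L * (\<sigma> * norm \<zeta>))\<^sup>2 / \<epsilon> + L * (\<sigma> * norm \<zeta>)\<^sup>2"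
      using norm_snd_at_plus_minus_le[OF hess grad_lip hess_lip small_grad eps_pos, of "(\<sigma> *\<^sub>R \<zeta>, 0)"]
        sigma_pos by (simp add: \<phi>_def norm_Pair)
    also have "\<dots> = 2 * (\<epsilon> + K * (norm \<zeta>)\<^sup>2)"
      using eps_pos by (simp add: K_def field_simps power2_eq_square)
    finally show ?thesis .
  qed
  ultimately have "(\<integral>\<^sup>+\<zeta>. ennreal (\<phi> \<zeta>) \<partial>std_gaussian) \<le> ennreal (\<epsilon> + K * CARD('n))"
    using eps_pos \<open>0 \<le> K\<close> by (intro nn_integral_std_gaussian_le_of_symmetric_bound) auto
  also have "\<epsilon> + K * CARD('n) = \<epsilon> + (1 / (2 * \<epsilon>)) * L\<^sup>2 * \<sigma>\<^sup>2 * real CARD('n)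
                     + (1/2) * \<sigma>\<^sup>2 * L * real CARD('n)"
    by (simp add: K_def field_simps)
  finally show ?thesis
    by (simp add: \<phi>_def)
qed

end
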